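(* Let $\mathbb{K}\in\{\mathbb{R},\mathbb{C}\}$, let $X$ be a Hausdorff topological vector space over $\mathbb{K}$ whose topology is weak, and let $T:X\to X$ be a continuous linear operator. Then the following conditions are equivalent: (1) the dual operator $T'$ has no non-trivial finite dimensional invariant subspaces; (2) $T$ is transitive; (3) $T$ is mixing; (4) for any non-empty open subsets $U$ and $V$ of $X$, there is $k\in\mathbb{N}$ such that $p(T)(U)\cap V\neq\varnothing$ for every polynomial $p$ with coefficients in $\mathbb{K}$ of degree $\geq k$.
   Context: The topology $\tau$ of a topological vector space $X$ is called weak if there is a linear space $Y$ of linear functionals on $X$ separating the points of $X$ such that $\tau$ is exactly the weakest topology making every $f\in Y$ continuous. $X'$ denotes the space of continuous linear functionals on $X$, and the dual operator $T':X'\to X'$ is $(T'f)(x)=f(Tx)$. A non-trivial subspace means a subspace different from $\{0\}$; a subspace $L$ is invariant for $T'$ if $T'(L)\subseteq L$. $T$ is transitive if for any non-empty open $U,V\subseteq X$ there is $n\in\mathbb{N}$ with $T^n(U)\cap V\neq\varnothing$. $T$ is mixing if for any non-empty open $U,V\subseteq X$ there is $n\in\mathbb{N}$ such that $T^m(U)\cap V\neq\varnothing$ for every $m\geq n$. *)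

theory Defs
  imports "HOL-Analysis.Analysis" "HOL-Computational_Algebra.Polynomial"
begin

text \<open>Setting: a vector space X (a type 'v) over a scalar field 'k (instantiated to
  real and to complex in the main theorem), with scalar multiplication sc,
  and a topology tau on X.\<close>

definition Hausdorff_tvs :: "('k::real_normed_field \<Rightarrow> 'v::ab_group_add \<Rightarrow> 'v) \<Rightarrow> 'v topology \<Rightarrow> bool" where
  "Hausdorff_tvs sc tau \<longleftrightarrow>
     vector_space sc \<and> topspace tau = UNIV \<and> Hausdorff_space tau \<and>
     continuous_map (prod_topology tau tau) tau (\<lambda>(x, y). x + y) \<and>
     continuous_map (prod_topology (euclidean :: 'k topology) tau) tau (\<lambda>(c, x). sc c x)"

definition linear_space_of_functionals ::
  "('k::real_normed_field \<Rightarrow> 'v::ab_group_add \<Rightarrow> 'v) \<Rightarrow> ('v \<Rightarrow> 'k) set \<Rightarrow> bool" where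
  "linear_space_of_functionals sc Y \<longleftrightarrow>
     (\<forall>f\<in>Y. Vector_Spaces.linear sc (*) f) \<and> (\<lambda>x. 0) \<in> Y \<and>
     (\<forall>f\<in>Y. \<forall>g\<in>Y. (\<lambda>x. f x + g x) \<in> Y) \<and>
     (\<forall>c. \<forall>f\<in>Y. (\<lambda>x. c * f x) \<in> Y)"

definition separates_points :: "('v \<Rightarrow> 'k) set \<Rightarrow> bool" where
  "separates_points Y \<longleftrightarrow> (\<forall>x y. x \<noteq> y \<longrightarrow> (\<exists>f\<in>Y. f x \<noteq> f y))"

definition is_weakest_topology_for :: "('v \<Rightarrow> 'k::real_normed_field) set \<Rightarrow> 'v topology \<Rightarrow> bool" where
  "is_weakest_topology_for Y tau \<longleftrightarrow>
     topspace tau = UNIV \<and> (\<forall>f\<in>Y. continuous_map tau euclidean f) \<and>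
     (\<forall>sigma :: 'v topology. topspace sigma = UNIV \<and> (\<forall>f\<in>Y. continuous_map sigma euclidean f)
        \<longrightarrow> (\<forall>S. openin tau S \<longrightarrow> openin sigma S))"

definition weak_topology :: "('k::real_normed_field \<Rightarrow> 'v::ab_group_add \<Rightarrow> 'v) \<Rightarrow> 'v topology \<Rightarrow> bool" where
  "weak_topology sc tau \<longleftrightarrow>
     (\<exists>Y. linear_space_of_functionals sc Y \<and> separates_points Y \<and> is_weakest_topology_for Y tau)"

definition dual_space :: "('k::real_normed_field \<Rightarrow> 'v::ab_group_add \<Rightarrow> 'v) \<Rightarrow> 'v topology \<Rightarrow> ('v \<Rightarrow> 'k) set" where
  "dual_space sc tau = {f. Vector_Spaces.linear sc (*) f \<and> continuous_map tau euclidean f}"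

definition dual_op :: "('v \<Rightarrow> 'v) \<Rightarrow> ('v \<Rightarrow> 'k) \<Rightarrow> ('v \<Rightarrow> 'k)" where
  "dual_op T f = (\<lambda>x. f (T x))"

definition is_subspace_of :: "('v \<Rightarrow> 'k::real_normed_field) set \<Rightarrow> ('v \<Rightarrow> 'k) set \<Rightarrow> bool" where
  "is_subspace_of L D \<longleftrightarrow> L \<subseteq> D \<and> (\<lambda>x. 0) \<in> L \<and>
     (\<forall>f\<in>L. \<forall>g\<in>L. (\<lambda>x. f x + g x) \<in> L) \<and> (\<forall>c. \<forall>f\<in>L. (\<lambda>x. c * f x) \<in> L)"

definition finite_dimensional_fs :: "('v \<Rightarrow> 'k::real_normed_field) set \<Rightarrow> bool" where
  "finite_dimensional_fs L \<longleftrightarrow>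
     (\<exists>F. finite F \<and> F \<subseteq> L \<and> L = {(\<lambda>x. \<Sum>f\<in>F. c f * f x) | c. True})"

definition dual_has_no_nontrivial_fd_invariant_subspace ::
  "('k::real_normed_field \<Rightarrow> 'v::ab_group_add \<Rightarrow> 'v) \<Rightarrow> 'v topology \<Rightarrow> ('v \<Rightarrow> 'v) \<Rightarrow> bool" where
  "dual_has_no_nontrivial_fd_invariant_subspace sc tau T \<longleftrightarrow>
     \<not> (\<exists>L. is_subspace_of L (dual_space sc tau) \<and> L \<noteq> {\<lambda>x. 0} \<and>
            finite_dimensional_fs L \<and> dual_op T ` L \<subseteq> L)"

text \<open>Natural numbers N are taken to be {1,2,...}.\<close>
definition transitive_op :: "'v topology \<Rightarrow> ('v \<Rightarrow> 'v) \<Rightarrow> bool" where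
  "transitive_op tau T \<longleftrightarrow>
     (\<forall>U V. openin tau U \<and> U \<noteq> {} \<and> openin tau V \<and> V \<noteq> {} \<longrightarrow>
        (\<exists>n\<ge>1. (T ^^ n) ` U \<inter> V \<noteq> {}))"

definition mixing_op :: "'v topology \<Rightarrow> ('v \<Rightarrow> 'v) \<Rightarrow> bool" where
  "mixing_op tau T \<longleftrightarrow>
     (\<forall>U V. openin tau U \<and> U \<noteq> {} \<and> openin tau V \<and> V \<noteq> {} \<longrightarrow>
        (\<exists>n\<ge>1. \<forall>m\<ge>n. (T ^^ m) ` U \<inter> V \<noteq> {}))"

definition poly_op :: "('k::comm_ring_1 \<Rightarrow> 'v::ab_group_add \<Rightarrow> 'v) \<Rightarrow> 'k poly \<Rightarrow> ('v \<Rightarrow> 'v) \<Rightarrow> 'v \<Rightarrow> 'v" where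
  "poly_op sc p T x = (\<Sum>i\<le>degree p. sc (coeff p i) ((T ^^ i) x))"

text \<open>The zero polynomial (degree -infinity by convention) is excluded.\<close>
definition poly_mixing_op :: "('k::real_normed_field \<Rightarrow> 'v::ab_group_add \<Rightarrow> 'v) \<Rightarrow> 'v topology \<Rightarrow> ('v \<Rightarrow> 'v) \<Rightarrow> bool" where
  "poly_mixing_op sc tau T \<longleftrightarrow>
     (\<forall>U V. openin tau U \<and> U \<noteq> {} \<and> openin tau V \<and> V \<noteq> {} \<longrightarrow>
        (\<exists>k::nat. \<forall>p::'k poly. p \<noteq> 0 \<and> degree p \<ge> k \<longrightarrow> poly_op sc p T ` U \<inter> V \<noteq> {}))"

definition equivalences_hold :: "('k::real_normed_field \<Rightarrow> 'v::ab_group_add \<Rightarrow> 'v) \<Rightarrow> 'v topology \<Rightarrow> ('v \<Rightarrow> 'v) \<Rightarrow> bool" where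
  "equivalences_hold sc tau T \<longleftrightarrow>
     (dual_has_no_nontrivial_fd_invariant_subspace sc tau T \<longleftrightarrow> transitive_op tau T) \<and>
     (transitive_op tau T \<longleftrightarrow> mixing_op tau T) \<and>
     (mixing_op tau T \<longleftrightarrow> poly_mixing_op sc tau T)"

end

theory Submission
  imports Defs "HOL-Library.Function_Algebras" "HOL-Computational_Algebra.Fundamental_Theorem_Algebra"
begin

text \<open>
  (1) \<open>\<Longrightarrow>\<close> (4): nonempty open sets of the weak topology contain joint fibres
  \<open>{x. \<forall>g\<in>G. g x = g u}\<close> for finite sets \<open>G\<close> of functionals, so \<open>p(T)\<close> maps one such
  fibre into another as soon as the linear system \<open>g x = g u\<close>, \<open>g (p(T) x) = g v\<close>
  (\<open>g \<in> G\<close>) is consistent. It can only be inconsistent if \<open>p(T') e \<in> span G\<close> for some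
  nonzero \<open>e \<in> span G\<close>. Without finite-dimensional \<open>T'\<close>-invariant subspaces every nonzero
  \<open>T'\<close>-orbit is linearly independent, and a dimension count along the filtration
  \<open>span {T'\<^sup>i g | i < n, g \<in> G}\<close> rules this out once \<open>deg p\<close> is large.
  (4) \<open>\<Longrightarrow>\<close> (3) \<open>\<Longrightarrow>\<close> (2) is immediate with \<open>p = X\<^sup>m\<close>.
  (2) \<open>\<Longrightarrow>\<close> (1): a finite-dimensional invariant subspace gives a nonzero \<open>f \<in> X'\<close>
  annihilated by a polynomial in \<open>T'\<close>; splitting off linear factors over \<open>\<complex>\<close> yields a
  continuous functional \<open>h \<noteq> 0\<close> with \<open>h \<circ> T = z h\<close>, and then no iterate of \<open>T\<close>
  can map \<open>{|h| < 1}\<close> into \<open>{|h| > 2}\<close> and also back.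
\<close>

definition fun_scale :: "'k::field \<Rightarrow> ('v \<Rightarrow> 'k) \<Rightarrow> 'v \<Rightarrow> 'k" where
  "fun_scale c f = (\<lambda>x. c * f x)"

interpretation fun_space: vector_space "fun_scale :: 'k::field \<Rightarrow> ('v \<Rightarrow> 'k) \<Rightarrow> _"
  by unfold_locales (auto simp: fun_scale_def fun_eq_iff algebra_simps)

interpretation fun_space_pair:
  vector_space_pair "fun_scale :: 'k::field \<Rightarrow> ('v \<Rightarrow> 'k) \<Rightarrow> _" "fun_scale :: 'k \<Rightarrow> ('v \<Rightarrow> 'k) \<Rightarrow> _"
  by unfold_locales

lemma sum_fun_apply: "(\<Sum>a\<in>A. F a) x = (\<Sum>a\<in>A. F a x)"
  by (induction A rule: infinite_finite_induct) auto

lemma fun_space_span_finite: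
  "finite B \<Longrightarrow> fun_space.span B = {(\<lambda>x. \<Sum>f\<in>B. c f * f x) | c. True}"
  by (auto simp: fun_space.span_finite fun_eq_iff sum_fun_apply fun_scale_def)

lemma (in vector_space) subspace_chain_stabilises:
  assumes "finite G" and "\<And>n. subspace (K n)" and "\<And>n. K n \<subseteq> span G"
    and "\<And>m n. m \<le> n \<Longrightarrow> K m \<subseteq> K n"
  shows "\<exists>n0. \<forall>n\<ge>n0. K n = K n0"
proof -
  have "\<exists>B. B \<subseteq> K n \<and> independent B \<and> K n \<subseteq> span B" for n
    by (meson maximal_independent_subset)
  then obtain B where B: "\<And>n. B n \<subseteq> K n" "\<And>n. independent (B n)" "\<And>n. K n \<subseteq> span (B n)"
    by metis
  have bound: "finite (B n) \<and> card (B n) \<le> card G" for n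
    using independent_span_bound[OF assms(1) B(2)] B(1) assms(3) by blast
  have "finite (range (\<lambda>n. card (B n)))"
    by (rule finite_subset[of _ "{..card G}"]) (use bound in auto)
  then obtain n0 where n0: "\<And>n. card (B n) \<le> card (B n0)"
    by (metis (no_types, lifting) Max_ge Max_in UNIV_not_empty image_is_empty rangeE rangeI)
  have "K n \<subseteq> K n0" if "n \<ge> n0" for n
  proof
    fix y assume y: "y \<in> K n"
    show "y \<in> K n0"
    proof (rule ccontr)
      assume "y \<notin> K n0"
      then have y_new: "y \<notin> span (B n0)"
        using span_minimal[OF B(1) assms(2)] by auto
      have "insert y (B n0) \<subseteq> span (B n)"
        using y B(1)[of n0] assms(4)[OF that] B(3)[of n] by auto
      then have "card (insert y (B n0)) \<le> card (B n)"
        using independent_span_bound independent_insertI[OF y_new B(2)] bound by blast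
      moreover have "y \<notin> B n0" using y_new span_base by blast
      ultimately show False using n0[of n] bound by simp
    qed
  qed
  then show ?thesis using assms(4) by blast
qed

lemma (in vector_space) linear_funpow:
  "Vector_Spaces.linear scale scale f \<Longrightarrow> Vector_Spaces.linear scale scale (f ^^ n)"
  by (induction n) (auto simp: linear_id intro: Vector_Spaces.linear_compose)

lemma continuous_map_funpow: "continuous_map X X f \<Longrightarrow> continuous_map X X (f ^^ n)"
  by (induction n) (auto intro: continuous_map_compose)

lemma continuous_map_mult_left:
  fixes f :: "'a \<Rightarrow> 'k::real_normed_field"
  shows "continuous_map X euclidean f \<Longrightarrow> continuous_map X euclidean (\<lambda>x. c * f x)"
  by (simp add: continuous_map_atin tendsto_mult_left)

lemma (in vector_space) family_dependent_if_card_exceeds: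
  assumes "finite S" "finite B" "v ` S \<subseteq> span B" "card B < card S"
  obtains c where "\<exists>i\<in>S. c i \<noteq> 0" "(\<Sum>i\<in>S. scale (c i) (v i)) = 0"
proof (cases "inj_on v S")
  case True
  have "dependent (v ` S)"
  proof (rule ccontr)
    assume "\<not> dependent (v ` S)"
    then have "card (v ` S) \<le> card B"
      using independent_span_bound[OF assms(2) _ assms(3)] by simp
    then show False
      using assms(4) card_image[OF True] by simp
  qed
  then have "\<exists>u. (\<exists>w\<in>v ` S. u w \<noteq> 0) \<and> (\<Sum>w\<in>v ` S. scale (u w) w) = 0"
    by (simp only: dependent_finite[OF finite_imageI[OF assms(1)]])
  then obtain u where u: "\<exists>w\<in>v ` S. u w \<noteq> 0" "(\<Sum>w\<in>v ` S. scale (u w) w) = 0"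
    by blast
  have "\<exists>i\<in>S. (u \<circ> v) i \<noteq> 0"
    using u(1) by auto
  moreover have "(\<Sum>i\<in>S. scale ((u \<circ> v) i) (v i)) = 0"
    using u(2) by (simp add: sum.reindex[OF True])
  ultimately show ?thesis by (rule that)
next
  case False
  then obtain i i' where i: "i \<in> S" "i' \<in> S" "i \<noteq> i'" "v i = v i'"
    by (auto simp: inj_on_def)
  define c :: "_ \<Rightarrow> 'a" where "c k = (if k = i then 1 else 0) - (if k = i' then 1 else 0)" for k
  have "(\<Sum>k\<in>S. scale (c k) (v k)) = (\<Sum>k\<in>S. (if k = i then v k else 0) - (if k = i' then v k else 0))"
    by (intro sum.cong) (auto simp: c_def)
  also have "\<dots> = 0"
    using i assms(1) by (simp add: sum_subtractf)
  finally have "(\<Sum>k\<in>S. scale (c k) (v k)) = 0" .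
  moreover have "c i \<noteq> 0"
    using i(3) by (simp add: c_def)
  ultimately show ?thesis
    using that[of c] i(1) by blast
qed

definition dual_iter :: "('v \<Rightarrow> 'v) \<Rightarrow> nat \<Rightarrow> ('v \<Rightarrow> 'k) \<Rightarrow> 'v \<Rightarrow> 'k" where
  "dual_iter T n f = (\<lambda>x. f ((T ^^ n) x))"

lemma dual_iter_0 [simp]: "dual_iter T 0 f = f"
  by (simp add: dual_iter_def)

lemma dual_iter_dual_iter: "dual_iter T m (dual_iter T n f) = dual_iter T (m + n) f"
  by (simp add: dual_iter_def add.commute[of m n] funpow_add)

lemma dual_op_eq_dual_iter: "dual_op T = dual_iter T 1"
  by (simp add: fun_eq_iff dual_op_def dual_iter_def)

lemma linear_dual_iter: "Vector_Spaces.linear fun_scale fun_scale (dual_iter T n)"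
  by (auto simp: Vector_Spaces.linear_iff fun_space.vector_space_axioms dual_iter_def fun_scale_def)

definition orbit_independent :: "('v \<Rightarrow> 'v) \<Rightarrow> ('v \<Rightarrow> 'k::field) \<Rightarrow> bool" where
  "orbit_independent T e \<longleftrightarrow>
     (\<forall>N. inj_on (\<lambda>j. dual_iter T j e) {..N} \<and> fun_space.independent ((\<lambda>j. dual_iter T j e) ` {..N}))"

text \<open>The functional \<open>p(T') g\<close>; \<open>g\<close> need not be linear.\<close>

definition dual_poly :: "'k::comm_ring_1 poly \<Rightarrow> ('v \<Rightarrow> 'v) \<Rightarrow> ('v \<Rightarrow> 'k) \<Rightarrow> 'v \<Rightarrow> 'k" where
  "dual_poly p T g x = (\<Sum>i\<le>degree p. coeff p i * g ((T ^^ i) x))"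

lemma dual_poly_eq_sum:
  "dual_poly p T g = (\<Sum>i\<le>degree p. fun_scale (coeff p i) (dual_iter T i g))"
  by (simp add: fun_eq_iff dual_poly_def sum_fun_apply fun_scale_def dual_iter_def)

lemma dual_poly_upto:
  "degree p \<le> M \<Longrightarrow> dual_poly p T g x = (\<Sum>i\<le>M. coeff p i * g ((T ^^ i) x))"
  unfolding dual_poly_def by (intro sum.mono_neutral_left) (auto simp: coeff_eq_0)

lemma dual_poly_add: "dual_poly (p + q) T g x = dual_poly p T g x + dual_poly q T g x"
  using degree_add_le_max[of p q]
  by (simp add: dual_poly_upto[of _ "max (degree p) (degree q)"] sum.distrib distrib_right)

lemma dual_poly_diff: "dual_poly (p - q) T g x = dual_poly p T g x - dual_poly q T g x"
  using degree_diff_le_max[of p q]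
  by (simp add: dual_poly_upto[of _ "max (degree p) (degree q)"] sum_subtractf left_diff_distrib)

lemma dual_poly_smult: "dual_poly (smult a p) T g x = a * dual_poly p T g x"
  by (simp only: dual_poly_upto[OF degree_smult_le]) (simp add: dual_poly_def sum_distrib_left mult.assoc)

lemma dual_poly_pCons_0: "dual_poly (pCons 0 p) T g x = dual_poly p T g (T x)"
proof -
  have "dual_poly (pCons 0 p) T g x = (\<Sum>i\<le>Suc (degree p). coeff (pCons 0 p) i * g ((T ^^ i) x))"
    by (rule dual_poly_upto[OF degree_pCons_le])
  also have "\<dots> = dual_poly p T g (T x)"
    unfolding dual_poly_def by (subst sum.atMost_Suc_shift) (simp add: funpow_swap1)
  finally show ?thesis .
qed

lemma dual_poly_linear_factor:
  "dual_poly ([:-z, 1:] * p) T g x = dual_poly p T g (T x) - z * dual_poly p T g x"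
  by (simp add: mult_pCons_left dual_poly_add dual_poly_diff dual_poly_smult dual_poly_pCons_0)

lemma linear_dual_poly: "Vector_Spaces.linear fun_scale fun_scale (dual_poly p T)"
  by (auto simp: Vector_Spaces.linear_iff fun_space.vector_space_axioms fun_eq_iff dual_poly_def
      fun_scale_def algebra_simps sum.distrib sum_distrib_left)

lemma dual_poly_of_coefficients:
  "dual_poly (\<Sum>j\<le>N. monom (c j) j) T g x = (\<Sum>j\<le>N. c j * g ((T ^^ j) x))"
proof -
  have "coeff (\<Sum>j\<le>N. monom (c j) j) i = (if i \<le> N then c i else 0)" for i
    by (simp add: coeff_sum coeff_monom)
  moreover from this have "degree (\<Sum>j\<le>N. monom (c j) j) \<le> N"
    by (intro degree_le) auto
  ultimately show ?thesis by (simp add: dual_poly_upto)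
qed

lemma dual_op_orbit_span_invariant:
  fixes T :: "'v \<Rightarrow> 'v" and e :: "'v \<Rightarrow> 'k::field" and N :: nat
  defines "B \<equiv> (\<lambda>j. dual_iter T j e) ` {..N}"
  assumes "dual_iter T (Suc N) e \<in> fun_space.span B"
  shows "dual_op T ` fun_space.span B \<subseteq> fun_space.span B"
proof -
  have "dual_op T ` B \<subseteq> fun_space.span B"
  proof
    fix y assume "y \<in> dual_op T ` B"
    then obtain j where "j \<le> N" "y = dual_iter T (Suc j) e"
      by (auto simp: B_def dual_op_eq_dual_iter dual_iter_dual_iter)
    then show "y \<in> fun_space.span B"
      using assms(2) by (cases "j = N") (auto simp: B_def intro: fun_space.span_base)
  qed
  then show ?thesis
    by (simp add: dual_op_eq_dual_iter fun_space_pair.linear_span_image[OF linear_dual_iter,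
          symmetric] fun_space.span_minimal[OF _ fun_space.subspace_span])
qed

section \<open>High-degree polynomials in the dual operator leave a finite-dimensional space\<close>

text \<open>Once the absorbed
  subspaces of the finite-dimensional \<open>span G\<close> have stabilised, a functional that first
  enters the filtration at level \<open>n + 1\<close> is moved by \<open>T'\<close> to one that first enters at
  level \<open>n + 2\<close>; hence the top-degree term of \<open>p(T') e\<close> is not cancelled inside
  \<open>span G\<close>.\<close>

locale dual_orbit_filtration =
  fixes T :: "'v \<Rightarrow> 'v" and G :: "('v \<Rightarrow> 'k::field) set"
  assumes finite_G: "finite G"
begin

definition gens :: "nat \<Rightarrow> ('v \<Rightarrow> 'k) set" where
  "gens n = (\<Union>i<n. dual_iter T i ` G)"

definition stage :: "nat \<Rightarrow> ('v \<Rightarrow> 'k) set" where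
  "stage n = fun_space.span (gens n)"

definition base :: "('v \<Rightarrow> 'k) set" where
  "base = fun_space.span G"

definition absorbed :: "nat \<Rightarrow> ('v \<Rightarrow> 'k) set" where
  "absorbed n = {e \<in> base. dual_iter T n e \<in> stage n}"

lemma finite_gens: "finite (gens n)"
  using finite_G by (simp add: gens_def)

lemma subspace_stage: "fun_space.subspace (stage n)"
  by (simp add: stage_def fun_space.subspace_span)

lemma subspace_base: "fun_space.subspace base"
  by (simp add: base_def fun_space.subspace_span)

lemma stage_mono: "m \<le> n \<Longrightarrow> stage m \<subseteq> stage n"
  unfolding stage_def gens_def by (intro fun_space.span_mono UN_mono) auto

lemma base_subset_stage: "1 \<le> n \<Longrightarrow> base \<subseteq> stage n"
proof -
  assume "1 \<le> n"
  then have "dual_iter T 0 ` G \<subseteq> gens n"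
    unfolding gens_def by (intro subsetI UN_I[of 0]) auto
  then show ?thesis
    unfolding base_def stage_def by (intro fun_space.span_mono) simp
qed

lemma dual_iter_stage: "v \<in> stage n \<Longrightarrow> dual_iter T j v \<in> stage (n + j)"
proof -
  assume v: "v \<in> stage n"
  have "dual_iter T j ` gens n \<subseteq> gens (n + j)"
    by (force simp: gens_def dual_iter_dual_iter)
  then have "fun_space.span (dual_iter T j ` gens n) \<subseteq> stage (n + j)"
    unfolding stage_def by (rule fun_space.span_mono)
  then show ?thesis
    using v by (auto simp: stage_def fun_space_pair.linear_span_image[OF linear_dual_iter])
qed

lemma dual_iter_base: "e \<in> base \<Longrightarrow> dual_iter T j e \<in> stage (Suc j)"
  using dual_iter_stage[of e 1 j] base_subset_stage[of 1] by auto

lemma stage_Suc_decompose: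
  assumes "v \<in> stage (Suc n)"
  obtains w e where "w \<in> stage n" "e \<in> base" "v = w + dual_iter T n e"
proof -
  have "gens (Suc n) = gens n \<union> dual_iter T n ` G"
    by (auto simp: gens_def lessThan_Suc)
  moreover have "fun_space.span (dual_iter T n ` G) = dual_iter T n ` base"
    unfolding base_def by (rule fun_space_pair.linear_span_image[OF linear_dual_iter])
  ultimately have "stage (Suc n) = {w + b | w b. w \<in> stage n \<and> b \<in> dual_iter T n ` base}"
    by (simp add: stage_def fun_space.span_Un)
  then show ?thesis using assms that by blast
qed

lemma subspace_absorbed: "fun_space.subspace (absorbed n)"
  using subspace_stage[of n] subspace_base
  unfolding fun_space.subspace_def absorbed_def
  by (auto simp: fun_space_pair.linear_add[OF linear_dual_iter]
      fun_space_pair.linear_scale[OF linear_dual_iter] fun_space_pair.linear_0[OF linear_dual_iter])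

lemma absorbed_mono: "m \<le> n \<Longrightarrow> absorbed m \<subseteq> absorbed n"
proof (induction n)
  case (Suc n)
  have "dual_iter T (Suc n) e \<in> stage (Suc n)" if "dual_iter T n e \<in> stage n" for e
    using dual_iter_stage[OF that, of 1] by (simp add: dual_iter_dual_iter)
  then have "absorbed n \<subseteq> absorbed (Suc n)"
    by (auto simp: absorbed_def)
  then show ?case using Suc by (auto simp: le_Suc_eq)
qed simp

lemma absorbed_stabilises: "\<exists>n0. \<forall>n\<ge>n0. absorbed n = absorbed n0"
  by (rule fun_space.subspace_chain_stabilises[OF finite_G subspace_absorbed _ absorbed_mono])
    (auto simp: absorbed_def base_def)

context
  fixes n0 assumes absorbed_stable: "\<And>n. n \<ge> n0 \<Longrightarrow> absorbed n = absorbed n0"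
begin

lemma exact_level_shift:
  assumes "n \<ge> n0" and v: "v \<in> stage (Suc n)" "v \<notin> stage n"
  shows "dual_iter T 1 v \<notin> stage (Suc n)"
proof
  assume shifted: "dual_iter T 1 v \<in> stage (Suc n)"
  obtain w e where w: "w \<in> stage n" and e: "e \<in> base" and v_eq: "v = w + dual_iter T n e"
    using stage_Suc_decompose[OF v(1)] by blast
  have "dual_iter T 1 v = dual_iter T 1 w + dual_iter T (Suc n) e"
    by (simp add: v_eq fun_space_pair.linear_add[OF linear_dual_iter] dual_iter_dual_iter)
  moreover have "dual_iter T 1 w \<in> stage (Suc n)"
    using dual_iter_stage[OF w, of 1] by simp
  ultimately have "dual_iter T (Suc n) e \<in> stage (Suc n)"
    using shifted fun_space.subspace_diff[OF subspace_stage] by (metis add_diff_cancel_left')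
  then have "e \<in> absorbed n"
    using e absorbed_stable[of "Suc n"] absorbed_stable[of n] \<open>n \<ge> n0\<close> by (auto simp: absorbed_def)
  then have "v \<in> stage n"
    using w fun_space.subspace_add[OF subspace_stage] by (auto simp: v_eq absorbed_def)
  then show False using v by simp
qed

lemma exact_level_iter:
  assumes "n \<ge> n0" and v: "v \<in> stage (Suc n)" "v \<notin> stage n"
  shows "dual_iter T j v \<in> stage (Suc n + j) \<and> dual_iter T j v \<notin> stage (n + j)"
proof (induction j)
  case (Suc j)
  have "dual_iter T 1 (dual_iter T j v) \<notin> stage (Suc (n + j))"
    using exact_level_shift[of "n + j" "dual_iter T j v"] Suc \<open>n \<ge> n0\<close> by simp
  then show ?case using dual_iter_stage[OF v(1), of "Suc j"] by (simp add: dual_iter_dual_iter)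
qed (use v in simp)

text \<open>The top-degree term lies outside \<open>stage (n + D)\<close> while all lower ones lie inside.\<close>

lemma exact_level_sum:
  assumes "n \<ge> n0" and v: "v \<in> stage (Suc n)" "v \<notin> stage n" and "c D \<noteq> 0"
  shows "(\<Sum>i\<le>D. fun_scale (c i) (dual_iter T i v)) \<notin> stage (n + D)"
proof
  let ?S = "stage (n + D)"
  assume sum_in: "(\<Sum>i\<le>D. fun_scale (c i) (dual_iter T i v)) \<in> ?S"
  have lower_in: "(\<Sum>i<D. fun_scale (c i) (dual_iter T i v)) \<in> ?S"
  proof (intro fun_space.subspace_sum[OF subspace_stage] fun_space.subspace_scale[OF subspace_stage])
    fix i assume "i \<in> {..<D}"
    then show "dual_iter T i v \<in> ?S"
      using exact_level_iter[OF assms(1-3), of i] stage_mono[of "Suc n + i" "n + D"] by auto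
  qed
  have "(\<Sum>i\<le>D. fun_scale (c i) (dual_iter T i v)) =
      fun_scale (c D) (dual_iter T D v) + (\<Sum>i<D. fun_scale (c i) (dual_iter T i v))"
    by (simp add: lessThan_Suc_atMost[symmetric])
  then have "fun_scale (c D) (dual_iter T D v) \<in> ?S"
    using fun_space.subspace_diff[OF subspace_stage sum_in lower_in] by simp
  then have "fun_scale (inverse (c D)) (fun_scale (c D) (dual_iter T D v)) \<in> ?S"
    by (rule fun_space.subspace_scale[OF subspace_stage])
  then have "dual_iter T D v \<in> ?S"
    using \<open>c D \<noteq> 0\<close> by (simp add: fun_scale_def mult.assoc[symmetric])
  then show False using exact_level_iter[OF assms(1-3), of D] by simp
qed

end

lemma exact_level_exists:
  assumes "v \<in> stage M" "v \<notin> stage n0"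
  shows "\<exists>n. n0 \<le> n \<and> n < M \<and> v \<in> stage (Suc n) \<and> v \<notin> stage n"
  using assms
proof (induction M)
  case (Suc M)
  show ?case
  proof (cases "v \<in> stage M")
    case True
    then show ?thesis using Suc by force
  next
    case False
    then have "n0 \<le> M" using stage_mono[of "Suc M" n0] Suc by (meson not_less_eq_eq subsetD)
    then show ?thesis using Suc False by auto
  qed
qed (use stage_mono[of 0 n0] in auto)

lemma orbit_leaves_stage:
  assumes "orbit_independent T e"
  shows "\<exists>j\<le>card (gens n). dual_iter T j e \<notin> stage n"
proof (rule ccontr)
  let ?a = "card (gens n)"
  assume "\<not> ?thesis"
  then have "(\<lambda>j. dual_iter T j e) ` {..?a} \<subseteq> fun_space.span (gens n)"
    by (auto simp: stage_def)
  then have "card ((\<lambda>j. dual_iter T j e) ` {..?a}) \<le> ?a"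
    using fun_space.independent_span_bound[OF finite_gens] assms
    by (auto simp: orbit_independent_def)
  moreover have "card ((\<lambda>j. dual_iter T j e) ` {..?a}) = Suc ?a"
    using assms by (simp add: orbit_independent_def card_image)
  ultimately show False by simp
qed

lemma dual_poly_in_base_imp_zero:
  assumes orbit: "\<And>e. e \<in> base \<Longrightarrow> e \<noteq> 0 \<Longrightarrow> orbit_independent T e"
  shows "\<exists>k. \<forall>p e. p \<noteq> 0 \<longrightarrow> degree p \<ge> k \<longrightarrow> e \<in> base \<longrightarrow> dual_poly p T e \<in> base \<longrightarrow> e = 0"
proof -
  obtain n0 where n0: "\<And>n. n \<ge> n0 \<Longrightarrow> absorbed n = absorbed n0"
    using absorbed_stabilises by blast
  let ?a = "card (gens n0)"
  have "e = 0" if p: "p \<noteq> 0" "degree p \<ge> 2 * ?a + 1" and e: "e \<in> base"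
    and image: "dual_poly p T e \<in> base" for p e
  proof (rule ccontr)
    assume "e \<noteq> 0"
    define d where "d = degree p"
    define summand where "summand i = fun_scale (coeff p i) (dual_iter T i e)" for i
    obtain j where j: "j \<le> ?a" "dual_iter T j e \<notin> stage n0"
      using orbit_leaves_stage[OF orbit[OF e \<open>e \<noteq> 0\<close>]] by blast
    define v where "v = dual_iter T j e"
    obtain n where n: "n0 \<le> n" "v \<in> stage (Suc n)" "v \<notin> stage n"
      using exact_level_exists[of v "Suc j" n0] dual_iter_base[OF e] j by (auto simp: v_def)
    let ?S = "stage (n + (d - j))"
    have split: "dual_poly p T e = (\<Sum>i<j. summand i) + (\<Sum>l\<le>d - j. summand (l + j))"
    proof -
      have "{..d} = {..<j} \<union> {j..d}" using j p by (auto simp: d_def)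
      have "dual_poly p T e = (\<Sum>i\<le>d. summand i)"
        by (simp add: dual_poly_eq_sum d_def summand_def)
      also have "\<dots> = (\<Sum>i<j. summand i) + (\<Sum>i=j..d. summand i)"
        using \<open>{..d} = {..<j} \<union> {j..d}\<close> by (subst sum.union_disjoint[symmetric]) auto
      also have "(\<Sum>i=j..d. summand i) = (\<Sum>l\<le>d - j. summand (l + j))"
        using sum.shift_bounds_cl_nat_ivl[of summand 0 j "d - j"] j p
        by (simp add: d_def atMost_atLeast0)
      finally show ?thesis .
    qed
    have lower: "(\<Sum>i<j. summand i) \<in> ?S"
      unfolding summand_def
    proof (intro fun_space.subspace_sum[OF subspace_stage] fun_space.subspace_scale[OF subspace_stage])
      fix i assume "i \<in> {..<j}"
      then have "Suc i \<le> n + (d - j)" using j p by (simp add: d_def)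
      then show "dual_iter T i e \<in> ?S"
        using dual_iter_base[OF e, of i] stage_mono by blast
    qed
    have whole: "dual_poly p T e \<in> ?S"
      using image base_subset_stage[of "n + (d - j)"] j p by (simp add: d_def subset_iff)
    have "coeff p (d - j + j) \<noteq> 0"
      using j p by (simp add: d_def)
    then have outside: "(\<Sum>l\<le>d - j. fun_scale (coeff p (l + j)) (dual_iter T l v)) \<notin> ?S"
      using exact_level_sum[OF n0 n, of "\<lambda>l. coeff p (l + j)" "d - j"] by blast
    have "(\<Sum>l\<le>d - j. summand (l + j)) \<in> ?S"
      using fun_space.subspace_diff[OF subspace_stage whole lower] split by simp
    moreover have "(\<Sum>l\<le>d - j. summand (l + j)) =
        (\<Sum>l\<le>d - j. fun_scale (coeff p (l + j)) (dual_iter T l v))"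
      by (simp add: summand_def v_def dual_iter_dual_iter)
    ultimately show False using outside by argo
  qed
  then show ?thesis by blast
qed

end

section \<open>Prescribing the values of finitely many linear functionals\<close>

definition respects_relations :: "('i \<Rightarrow> 'v \<Rightarrow> 'k::field) \<Rightarrow> 'i set \<Rightarrow> ('i \<Rightarrow> 'k) \<Rightarrow> bool" where
  "respects_relations \<phi> I c \<longleftrightarrow>
     (\<forall>a. (\<forall>x. (\<Sum>i\<in>I. a i * \<phi> i x) = 0) \<longrightarrow> (\<Sum>i\<in>I. a i * c i) = 0)"

lemma respects_relations_vanishing:
  fixes \<phi> :: "'i \<Rightarrow> 'v \<Rightarrow> 'k::field"
  assumes "respects_relations \<phi> I c" "finite I" "j \<in> I" "\<And>x. \<phi> j x = 0"
  shows "c j = 0"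
proof -
  let ?a = "\<lambda>i. if i = j then 1 else 0"
  have "(\<Sum>i\<in>I. ?a i * f i) = (\<Sum>i\<in>I. if i = j then f i else 0)" for f :: "_ \<Rightarrow> 'k"
    by (intro sum.cong) auto
  then have delta: "(\<Sum>i\<in>I. ?a i * f i) = f j" for f :: "_ \<Rightarrow> 'k"
    using assms(2,3) by simp
  have "\<forall>x. (\<Sum>i\<in>I. ?a i * \<phi> i x) = 0"
    using assms(4) by (simp add: delta)
  then have "(\<Sum>i\<in>I. ?a i * c i) = 0"
    using spec[OF assms(1)[unfolded respects_relations_def], of ?a] by blast
  then show ?thesis
    by (simp only: delta)
qed

lemma respects_relations_eliminate:
  fixes \<phi> :: "'i \<Rightarrow> 'v \<Rightarrow> 'k::field"
  assumes "respects_relations \<phi> (insert j I) c" "finite I" "j \<notin> I"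
  shows "respects_relations (\<lambda>i x. \<phi> i x - \<alpha> i * \<phi> j x) I (\<lambda>i. c i - \<alpha> i * c j)"
  unfolding respects_relations_def
proof (intro allI impI)
  fix a assume rel: "\<forall>x. (\<Sum>i\<in>I. a i * (\<phi> i x - \<alpha> i * \<phi> j x)) = 0"
  define s where "s = (\<Sum>i\<in>I. a i * \<alpha> i)"
  define a' where "a' = a(j := - s)"
  have a'_on_I: "(\<Sum>i\<in>I. a' i * f i) = (\<Sum>i\<in>I. a i * f i)" for f :: "_ \<Rightarrow> 'k"
    using assms(3) unfolding a'_def by (intro sum.cong) auto
  have expand: "(\<Sum>i\<in>I. a i * (f i - \<alpha> i * f j)) = (\<Sum>i\<in>insert j I. a' i * f i)" for f :: "_ \<Rightarrow> 'k"
    using assms(2,3) a'_on_I[of f]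
    by (simp add: a'_def s_def algebra_simps sum_subtractf sum_distrib_left sum_distrib_right)
  have "\<forall>x. (\<Sum>i\<in>insert j I. a' i * \<phi> i x) = 0"
    using rel expand[of "\<lambda>i. \<phi> i _"] by metis
  then have "(\<Sum>i\<in>insert j I. a' i * c i) = 0"
    using spec[OF assms(1)[unfolded respects_relations_def], of a'] by blast
  then show "(\<Sum>i\<in>I. a i * (c i - \<alpha> i * c j)) = 0"
    using expand[of c] by simp
qed

lemma linear_functionals_interpolate:
  fixes sc :: "'k::field \<Rightarrow> 'v::ab_group_add \<Rightarrow> 'v" and \<phi> :: "'i \<Rightarrow> 'v \<Rightarrow> 'k"
  assumes "vector_space sc" "finite I" "\<And>i. i \<in> I \<Longrightarrow> Vector_Spaces.linear sc (*) (\<phi> i)"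
    and "respects_relations \<phi> I c"
  shows "\<exists>x. \<forall>i\<in>I. \<phi> i x = c i"
  using assms(2-4)
proof (induction I arbitrary: \<phi> c rule: finite_induct)
  case (insert j I)
  interpret pair: vector_space_pair sc "(*) :: 'k \<Rightarrow> _"
    by (intro vector_space_pair.intro assms(1) vector_space_over_itself.vector_space_axioms)
  have linear_j: "Vector_Spaces.linear sc (*) (\<phi> j)"
    using insert.prems by simp
  show ?case
  proof (cases "\<forall>x. \<phi> j x = 0")
    case True
    then have "c j = 0"
      using respects_relations_vanishing[OF insert.prems(2)] insert.hyps by simp
    moreover obtain x where "\<forall>i\<in>I. \<phi> i x = c i"
      using insert.IH[of \<phi> c] insert.prems respects_relations_eliminate[OF insert.prems(2) insert.hyps(1,2),
          of "\<lambda>_. 0"]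
      by auto
    ultimately show ?thesis using True by auto
  next
    case False
    then obtain w where w: "\<phi> j w \<noteq> 0" by blast
    define \<alpha> where "\<alpha> i = \<phi> i w / \<phi> j w" for i
    obtain x where x: "\<forall>i\<in>I. \<phi> i x - \<alpha> i * \<phi> j x = c i - \<alpha> i * c j"
    proof -
      have "Vector_Spaces.linear sc (*) (\<lambda>x. \<phi> i x - \<alpha> i * \<phi> j x)" if "i \<in> I" for i
        using insert.prems(1) that linear_j
        by (intro pair.linear_compose_sub pair.linear_compose_scale_right) auto
      from insert.IH[OF this respects_relations_eliminate[OF insert.prems(2) insert.hyps(1,2)]]
      show ?thesis using that by blast
    qed
    txt \<open>Correct \<open>x\<close> along \<open>w\<close>; the eliminated equations are unaffected.\<close>
    define t where "t = (c j - \<phi> j x) / \<phi> j w"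
    have "\<phi> i (x + sc t w) = c i" if "i \<in> insert j I" for i
    proof -
      have at_shift: "\<phi> i (x + sc t w) = \<phi> i x + t * \<phi> i w"
        using insert.prems(1) that by (simp add: pair.linear_add pair.linear_scale)
      show ?thesis
      proof (cases "i = j")
        case False
        then have "\<phi> i x = c i - \<alpha> i * (c j - \<phi> j x)"
          using x that by (auto simp: algebra_simps)
        also have "\<alpha> i * (c j - \<phi> j x) = t * \<phi> i w"
          using w by (simp add: \<alpha>_def t_def)
        finally show ?thesis using at_shift by simp
      qed (use at_shift w in \<open>simp add: t_def\<close>)
    qed
    then show ?thesis by blast
  qed
qed simp

definition joint_fibre :: "('v \<Rightarrow> 'k) set \<Rightarrow> 'v \<Rightarrow> 'v set" where
  "joint_fibre G u = {x. \<forall>g\<in>G. g x = g u}"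

text \<open>The sets containing a finite joint fibre around each of their points form a topology
  in which every member of \<open>Y\<close> is continuous, so they include the weakest such topology.\<close>

lemma weakest_topology_open_contains_fibre:
  fixes Y :: "('v \<Rightarrow> 'k::real_normed_field) set"
  assumes "is_weakest_topology_for Y tau" "openin tau U" "u \<in> U"
  shows "\<exists>G. finite G \<and> G \<subseteq> Y \<and> joint_fibre G u \<subseteq> U"
proof -
  define fibre_open where
    "fibre_open S \<longleftrightarrow> (\<forall>u\<in>S. \<exists>G. finite G \<and> G \<subseteq> Y \<and> joint_fibre G u \<subseteq> S)" for S
  have "istopology fibre_open"
    unfolding istopology_def
  proof (intro conjI allI impI)
    fix S T assume S: "fibre_open S" and T: "fibre_open T"
    show "fibre_open (S \<inter> T)"
      unfolding fibre_open_def
    proof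
      fix u assume "u \<in> S \<inter> T"
      then obtain G H where "finite G" "G \<subseteq> Y" "joint_fibre G u \<subseteq> S"
        and "finite H" "H \<subseteq> Y" "joint_fibre H u \<subseteq> T"
        using S T unfolding fibre_open_def by (meson IntD1 IntD2)
      then show "\<exists>G. finite G \<and> G \<subseteq> Y \<and> joint_fibre G u \<subseteq> S \<inter> T"
        by (intro exI[of _ "G \<union> H"]) (auto simp: joint_fibre_def)
    qed
  next
    fix \<K> assume K: "\<forall>K\<in>\<K>. fibre_open K"
    show "fibre_open (\<Union>\<K>)"
      unfolding fibre_open_def
    proof
      fix u assume "u \<in> \<Union>\<K>"
      then obtain K where "K \<in> \<K>" "u \<in> K" by blast
      then have "fibre_open K" using K by blast
      then obtain G where "finite G" "G \<subseteq> Y" "joint_fibre G u \<subseteq> K"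
        using \<open>u \<in> K\<close> unfolding fibre_open_def by blast
      moreover have "K \<subseteq> \<Union>\<K>" using \<open>K \<in> \<K>\<close> by blast
      ultimately show "\<exists>G. finite G \<and> G \<subseteq> Y \<and> joint_fibre G u \<subseteq> \<Union>\<K>"
        by blast
    qed
  qed
  then have open_sigma: "openin (topology fibre_open) = fibre_open"
    by (rule topology_inverse')
  have "fibre_open UNIV"
    by (auto simp: fibre_open_def intro: exI[of _ "{}"])
  then have topspace_sigma: "topspace (topology fibre_open) = UNIV"
    unfolding topspace_def open_sigma by auto
  have "continuous_map (topology fibre_open) euclidean f" if "f \<in> Y" for f
    unfolding continuous_map_def topspace_sigma open_sigma
  proof (intro conjI allI impI)
    fix W :: "'k set" assume "openin euclidean W"
    show "fibre_open {x \<in> UNIV. f x \<in> W}"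
      unfolding fibre_open_def using that
      by (intro ballI exI[of _ "{f}"]) (auto simp: joint_fibre_def)
  qed auto
  then have "openin (topology fibre_open) U"
    using assms(1,2) topspace_sigma unfolding is_weakest_topology_for_def by blast
  then show ?thesis
    using assms(3) by (simp add: open_sigma fibre_open_def)
qed

locale continuous_linear_operator =
  fixes sc :: "'k::real_normed_field \<Rightarrow> 'v::ab_group_add \<Rightarrow> 'v" and tau :: "'v topology"
    and T :: "'v \<Rightarrow> 'v"
  assumes vector_space_sc: "vector_space sc"
    and topspace_tau: "topspace tau = UNIV"
    and linear_T: "Vector_Spaces.linear sc sc T"
    and continuous_T: "continuous_map tau tau T"
begin

sublocale functionals: vector_space_pair sc "(*) :: 'k \<Rightarrow> 'k \<Rightarrow> 'k"
  by (intro vector_space_pair.intro vector_space_sc vector_space_over_itself.vector_space_axioms)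

lemma subspace_dual_space: "fun_space.subspace (dual_space sc tau)"
  unfolding fun_space.subspace_def dual_space_def
  by (auto simp: zero_fun_def plus_fun_def fun_scale_def topspace_tau
      intro: functionals.linear_zero functionals.linear_compose_add
      functionals.linear_compose_scale_right continuous_map_add continuous_map_mult_left)

lemma dual_iter_in_dual_space:
  assumes "f \<in> dual_space sc tau"
  shows "dual_iter T n f \<in> dual_space sc tau"
proof -
  have "Vector_Spaces.linear sc (*) (f \<circ> T ^^ n)"
    by (rule Vector_Spaces.linear_compose[OF vector_space.linear_funpow[OF vector_space_sc linear_T]])
      (use assms in \<open>simp add: dual_space_def\<close>)
  moreover have "continuous_map tau euclidean (f \<circ> T ^^ n)"
    by (rule continuous_map_compose[OF continuous_map_funpow[OF continuous_T]])
      (use assms in \<open>simp add: dual_space_def\<close>)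
  ultimately show ?thesis
    by (simp add: dual_space_def dual_iter_def comp_def)
qed

lemma span_subset_dual_space: "G \<subseteq> dual_space sc tau \<Longrightarrow> fun_space.span G \<subseteq> dual_space sc tau"
  by (rule fun_space.span_minimal[OF _ subspace_dual_space])

lemma dual_poly_in_dual_space: "g \<in> dual_space sc tau \<Longrightarrow> dual_poly p T g \<in> dual_space sc tau"
  unfolding dual_poly_eq_sum
  by (intro fun_space.subspace_sum[OF subspace_dual_space] fun_space.subspace_scale[OF subspace_dual_space]
      dual_iter_in_dual_space)

lemma apply_poly_op: "g \<in> dual_space sc tau \<Longrightarrow> g (poly_op sc p T x) = dual_poly p T g x"
  by (simp add: dual_space_def poly_op_def dual_poly_def functionals.linear_sum functionals.linear_scale)

lemma finite_span_in_dual_space: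
  assumes "finite B" "B \<subseteq> dual_space sc tau"
  shows "is_subspace_of (fun_space.span B) (dual_space sc tau) \<and> finite_dimensional_fs (fun_space.span B)"
proof
  show "is_subspace_of (fun_space.span B) (dual_space sc tau)"
    unfolding is_subspace_of_def
    using span_subset_dual_space[OF assms(2)] fun_space.span_zero[of B]
      fun_space.span_add[of _ B] fun_space.span_scale[of _ B]
    by (auto simp: zero_fun_def plus_fun_def fun_scale_def)
  show "finite_dimensional_fs (fun_space.span B)"
    unfolding finite_dimensional_fs_def
    using assms(1) fun_space.span_superset[of B] fun_space_span_finite[OF assms(1)] by blast
qed

section \<open>No invariant subspace implies polynomial mixing\<close>

lemma orbit_independent_if_no_invariant_subspace:
  assumes no_invariant: "dual_has_no_nontrivial_fd_invariant_subspace sc tau T"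
    and e: "e \<in> dual_space sc tau" "e \<noteq> 0"
  shows "orbit_independent T e"
  unfolding orbit_independent_def
proof
  fix N
  show "inj_on (\<lambda>j. dual_iter T j e) {..N} \<and> fun_space.independent ((\<lambda>j. dual_iter T j e) ` {..N})"
  proof (induction N)
    case (Suc N)
    define B where "B = (\<lambda>j. dual_iter T j e) ` {..N}"
    have new: "dual_iter T (Suc N) e \<notin> fun_space.span B"
    proof
      assume "dual_iter T (Suc N) e \<in> fun_space.span B"
      then have "dual_op T ` fun_space.span B \<subseteq> fun_space.span B"
        unfolding B_def by (rule dual_op_orbit_span_invariant)
      moreover have "is_subspace_of (fun_space.span B) (dual_space sc tau) \<and>
          finite_dimensional_fs (fun_space.span B)"
        using e(1) by (intro finite_span_in_dual_space) (auto simp: B_def dual_iter_in_dual_space)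
      moreover have "e \<in> fun_space.span B"
        by (rule fun_space.span_base) (force simp: B_def)
      then have "fun_space.span B \<noteq> {\<lambda>x. 0}"
        using e(2) by (auto simp: zero_fun_def)
      ultimately show False
        using no_invariant unfolding dual_has_no_nontrivial_fd_invariant_subspace_def by blast
    qed
    then have "dual_iter T (Suc N) e \<notin> B"
      using fun_space.span_base by blast
    then show ?case
      using Suc fun_space.independent_insertI[OF new] by (simp add: B_def atMost_Suc)
  qed (use e in simp)
qed

text \<open>By interpolation: the hypothesis kills every linear relation between the functionals
  \<open>g\<close> and \<open>g \<circ> p(T)\<close>, \<open>g \<in> G\<close>.\<close>

lemma poly_op_hits_fibres:
  assumes "finite G" "G \<subseteq> dual_space sc tau"
    and trivial: "\<And>e. e \<in> fun_space.span G \<Longrightarrow> dual_poly p T e \<in> fun_space.span G \<Longrightarrow> e = 0"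
  shows "\<exists>x. x \<in> joint_fibre G u \<and> poly_op sc p T x \<in> joint_fibre G v"
proof -
  define I where "I = Inl ` G \<union> Inr ` G"
  define \<phi> :: "('v \<Rightarrow> 'k) + ('v \<Rightarrow> 'k) \<Rightarrow> 'v \<Rightarrow> 'k"
    where "\<phi> i = (case i of Inl g \<Rightarrow> g | Inr g \<Rightarrow> dual_poly p T g)" for i
  define c :: "('v \<Rightarrow> 'k) + ('v \<Rightarrow> 'k) \<Rightarrow> 'k" where "c i = (case i of Inl g \<Rightarrow> g u | Inr g \<Rightarrow> g v)" for i
  have sum_I: "(\<Sum>i\<in>I. F i) = (\<Sum>g\<in>G. F (Inl g)) + (\<Sum>g\<in>G. F (Inr g))" for F :: "_ \<Rightarrow> 'k"
    unfolding I_def using assms(1) by (subst sum.union_disjoint) (auto simp: sum.reindex)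
  have "\<exists>x. \<forall>i\<in>I. \<phi> i x = c i"
  proof (rule linear_functionals_interpolate[OF vector_space_sc])
    show "finite I" using assms(1) by (simp add: I_def)
    show "Vector_Spaces.linear sc (*) (\<phi> i)" if "i \<in> I" for i
      using that assms(2) dual_poly_in_dual_space by (auto simp: I_def \<phi>_def dual_space_def)
    show "respects_relations \<phi> I c"
      unfolding respects_relations_def
    proof (intro allI impI)
      fix a assume rel: "\<forall>x. (\<Sum>i\<in>I. a i * \<phi> i x) = 0"
      define f where "f = (\<Sum>g\<in>G. fun_scale (a (Inl g)) g)"
      define e where "e = (\<Sum>g\<in>G. fun_scale (a (Inr g)) g)"
      have f: "f \<in> fun_space.span G" and e: "e \<in> fun_space.span G"
        unfolding f_def e_def by (auto intro: fun_space.span_sum fun_space.span_scale fun_space.span_base)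
      have "dual_poly p T e = (\<Sum>g\<in>G. fun_scale (a (Inr g)) (dual_poly p T g))"
        unfolding e_def
        by (simp add: fun_space_pair.linear_sum[OF linear_dual_poly]
            fun_space_pair.linear_scale[OF linear_dual_poly])
      then have "f x + dual_poly p T e x = 0" for x
        using rel[rule_format, of x] unfolding sum_I
        by (simp add: \<phi>_def f_def sum_fun_apply fun_scale_def)
      then have "dual_poly p T e = fun_scale (-1) f"
        by (auto simp: fun_eq_iff fun_scale_def eq_neg_iff_add_eq_0 add.commute)
      then have "e = 0"
        using trivial[OF e] fun_space.span_scale[OF f, of "-1"] by simp
      then have "f = 0"
        using \<open>dual_poly p T e = fun_scale (-1) f\<close> by (auto simp: fun_eq_iff fun_scale_def dual_poly_def)
      have "(\<Sum>i\<in>I. a i * c i) = f u + e v"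
        unfolding sum_I by (simp add: c_def e_def f_def sum_fun_apply fun_scale_def)
      then show "(\<Sum>i\<in>I. a i * c i) = 0"
        using \<open>e = 0\<close> \<open>f = 0\<close> by simp
    qed
  qed
  then obtain x where x: "\<forall>i\<in>I. \<phi> i x = c i" by blast
  have "g x = g u" "g (poly_op sc p T x) = g v" if "g \<in> G" for g
    using x that assms(2) apply_poly_op by (force simp: I_def \<phi>_def c_def)+
  then show ?thesis
    by (auto simp: joint_fibre_def)
qed

lemma poly_mixing_if_no_invariant_subspace:
  assumes "weak_topology sc tau" and no_invariant: "dual_has_no_nontrivial_fd_invariant_subspace sc tau T"
  shows "poly_mixing_op sc tau T"
  unfolding poly_mixing_op_def
proof (intro allI impI)
  fix U V assume "openin tau U \<and> U \<noteq> {} \<and> openin tau V \<and> V \<noteq> {}"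
  then obtain u v where U: "openin tau U" "u \<in> U" and V: "openin tau V" "v \<in> V" by blast
  obtain Y where Y: "linear_space_of_functionals sc Y" "is_weakest_topology_for Y tau"
    using assms(1) unfolding weak_topology_def by blast
  have Y_dual: "Y \<subseteq> dual_space sc tau"
    using Y by (auto simp: dual_space_def linear_space_of_functionals_def is_weakest_topology_for_def)
  obtain G\<^sub>U G\<^sub>V where G\<^sub>U: "finite G\<^sub>U" "G\<^sub>U \<subseteq> Y" "joint_fibre G\<^sub>U u \<subseteq> U"
    and G\<^sub>V: "finite G\<^sub>V" "G\<^sub>V \<subseteq> Y" "joint_fibre G\<^sub>V v \<subseteq> V"
    using weakest_topology_open_contains_fibre[OF Y(2)] U V by metis
  define G where "G = G\<^sub>U \<union> G\<^sub>V"
  have G: "finite G" "G \<subseteq> dual_space sc tau"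
    using G\<^sub>U G\<^sub>V Y_dual by (auto simp: G_def)
  interpret dual_orbit_filtration T G
    by unfold_locales (rule G(1))
  have "orbit_independent T e" if "e \<in> base" "e \<noteq> 0" for e
    using that span_subset_dual_space[OF G(2)] orbit_independent_if_no_invariant_subspace[OF no_invariant]
    by (auto simp: base_def)
  from dual_poly_in_base_imp_zero[OF this] obtain k where
    k: "\<forall>p e. p \<noteq> 0 \<longrightarrow> degree p \<ge> k \<longrightarrow> e \<in> base \<longrightarrow> dual_poly p T e \<in> base \<longrightarrow> e = 0"
    by blast
  show "\<exists>k. \<forall>p. p \<noteq> 0 \<and> degree p \<ge> k \<longrightarrow> poly_op sc p T ` U \<inter> V \<noteq> {}"
  proof (intro exI allI impI)
    fix p :: "'k poly" assume "p \<noteq> 0 \<and> degree p \<ge> k"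
    then have "e = 0" if "e \<in> fun_space.span G" "dual_poly p T e \<in> fun_space.span G" for e
      using k[rule_format, of p e] that by (simp add: base_def)
    then have "\<exists>x. x \<in> joint_fibre G u \<and> poly_op sc p T x \<in> joint_fibre G v"
      by (rule poly_op_hits_fibres[OF G])
    then obtain x where "x \<in> joint_fibre G u" "poly_op sc p T x \<in> joint_fibre G v"
      by blast
    moreover have "joint_fibre G u \<subseteq> joint_fibre G\<^sub>U u" "joint_fibre G v \<subseteq> joint_fibre G\<^sub>V v"
      by (auto simp: joint_fibre_def G_def)
    ultimately show "poly_op sc p T ` U \<inter> V \<noteq> {}"
      using G\<^sub>U(3) G\<^sub>V(3) by blast
  qed
qed

lemma poly_op_monom: "poly_op sc (monom 1 m) T = T ^^ m"
proof -
  interpret vector_space sc by (rule vector_space_sc)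
  show ?thesis
    unfolding poly_op_def degree_monom_eq[OF one_neq_zero] coeff_monom
    by (simp add: fun_eq_iff if_distrib[of "\<lambda>c. sc c _"] cong: if_cong)
qed

lemma mixing_if_poly_mixing: "poly_mixing_op sc tau T \<Longrightarrow> mixing_op tau T"
  unfolding poly_mixing_op_def mixing_op_def
proof (intro allI impI)
  fix U V assume "\<forall>U V. openin tau U \<and> U \<noteq> {} \<and> openin tau V \<and> V \<noteq> {} \<longrightarrow>
      (\<exists>k. \<forall>p. p \<noteq> 0 \<and> k \<le> degree p \<longrightarrow> poly_op sc p T ` U \<inter> V \<noteq> {})"
    and "openin tau U \<and> U \<noteq> {} \<and> openin tau V \<and> V \<noteq> {}"
  then obtain k where k: "\<forall>p. p \<noteq> 0 \<and> k \<le> degree p \<longrightarrow> poly_op sc p T ` U \<inter> V \<noteq> {}"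
    by blast
  have "(T ^^ m) ` U \<inter> V \<noteq> {}" if "m \<ge> k" for m
    using k[rule_format, of "monom 1 m"] that by (simp add: degree_monom_eq poly_op_monom)
  then show "\<exists>n\<ge>1. \<forall>m\<ge>n. (T ^^ m) ` U \<inter> V \<noteq> {}"
    by (intro exI[of _ "max k 1"]) auto
qed

lemma orbit_relation_if_invariant_subspace:
  assumes "\<not> dual_has_no_nontrivial_fd_invariant_subspace sc tau T"
  obtains f N c where "f \<in> dual_space sc tau" "f \<noteq> 0" "\<exists>j\<le>N. c j \<noteq> 0"
    "\<And>x. (\<Sum>j\<le>N. c j * f ((T ^^ j) x)) = 0"
proof -
  obtain L where L: "is_subspace_of L (dual_space sc tau)" "L \<noteq> {\<lambda>x. 0}" "finite_dimensional_fs L"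
    "dual_op T ` L \<subseteq> L"
    using assms unfolding dual_has_no_nontrivial_fd_invariant_subspace_def by blast
  obtain F where "finite F" "L = {(\<lambda>x. \<Sum>f\<in>F. c f * f x) | c. True}"
    using L(3) unfolding finite_dimensional_fs_def by blast
  then have F: "finite F" "L = fun_space.span F"
    by (simp_all add: fun_space_span_finite)
  obtain f where f: "f \<in> L" "f \<noteq> 0"
    using L(1,2) by (auto simp: is_subspace_of_def zero_fun_def)
  have orbit_in_L: "dual_iter T j f \<in> L" for j
  proof (induction j)
    case (Suc j)
    then have "dual_op T (dual_iter T j f) \<in> L" using L(4) by blast
    then show ?case by (simp add: dual_op_eq_dual_iter dual_iter_dual_iter)
  qed (use f in simp)
  have "(\<lambda>j. dual_iter T j f) ` {..card F} \<subseteq> fun_space.span F"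
    using orbit_in_L F(2) by auto
  then obtain c where c: "\<exists>j\<in>{..card F}. c j \<noteq> 0"
    "(\<Sum>j\<le>card F. fun_scale (c j) (dual_iter T j f)) = 0"
    by (rule fun_space.family_dependent_if_card_exceeds[OF finite_atMost F(1)]) simp
  have "(\<Sum>j\<le>card F. c j * f ((T ^^ j) x)) = 0" for x
    using fun_cong[OF c(2), of x] by (simp add: sum_fun_apply fun_scale_def dual_iter_def)
  moreover have "f \<in> dual_space sc tau"
    using f(1) L(1) by (auto simp: is_subspace_of_def)
  ultimately show ?thesis
    using that f(2) c(1) by blast
qed

end

section \<open>Transitivity excludes finite-dimensional invariant subspaces\<close>

lemma eigenfunction_from_annihilating_poly:
  fixes g :: "'v \<Rightarrow> complex"
  assumes "q \<noteq> 0" "\<And>x. dual_poly q T g x = 0" "g \<noteq> 0"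
  shows "\<exists>r z. dual_poly r T g \<noteq> 0 \<and> (\<forall>x. dual_poly r T g (T x) = z * dual_poly r T g x)"
  using assms(1,2)
proof (induction "degree q" arbitrary: q rule: less_induct)
  case less
  have "degree q \<noteq> 0"
  proof
    assume "degree q = 0"
    then have "coeff q 0 * g x = 0" for x
      using less.prems(2)[of x] by (simp add: dual_poly_def)
    moreover have "coeff q 0 \<noteq> 0"
      using less.prems(1) \<open>degree q = 0\<close> leading_coeff_neq_0 by fastforce
    ultimately show False
      using assms(3) by (auto simp: fun_eq_iff)
  qed
  then obtain z where "poly q z = 0"
    by (metis constant_degree fundamental_theorem_of_algebra)
  then obtain r where q: "q = [:-z, 1:] * r"
    by (metis dvdE poly_eq_0_iff_dvd)
  then have "r \<noteq> 0" using less.prems(1) by auto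
  then have "degree q = degree [:-z, 1:] + degree r"
    unfolding q by (intro degree_mult_eq) auto
  then have degree_r: "degree r < degree q"
    by simp
  have eigen: "dual_poly r T g (T x) = z * dual_poly r T g x" for x
    using less.prems(2)[of x] unfolding q dual_poly_linear_factor by simp
  show ?case
  proof (cases "dual_poly r T g = 0")
    case True
    then show ?thesis using less.hyps[OF degree_r \<open>r \<noteq> 0\<close>] by (simp add: fun_eq_iff)
  next
    case False
    then show ?thesis using eigen by blast
  qed
qed

text \<open>Along an orbit \<open>|h|\<close> is multiplied by powers of \<open>|z|\<close>, so \<open>T\<close> cannot move points
  from \<open>{|h| < 1}\<close> into \<open>{|h| > 2}\<close> and also back.\<close>

lemma eigenfunctional_not_transitive:
  fixes h :: "'v \<Rightarrow> complex" and rs :: "real \<Rightarrow> 'v \<Rightarrow> 'v"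
  assumes topspace: "topspace tau = UNIV" and continuous: "continuous_map tau euclidean h"
    and homogeneous: "\<And>t x. h (rs t x) = of_real t * h x"
    and eigen: "\<And>x. h (T x) = z * h x" and "h x1 \<noteq> 0"
  shows "\<not> transitive_op tau T"
proof
  assume transitive: "transitive_op tau T"
  define U where "U = {x. cmod (h x) < 1}"
  define V where "V = {x. cmod (h x) > 2}"
  have "openin tau U" "openin tau V"
    using openin_continuous_map_preimage[OF continuous, of "ball 0 1"]
      openin_continuous_map_preimage[OF continuous, of "- cball 0 2"]
    by (simp_all add: U_def V_def topspace not_le open_Compl)
  moreover have "rs 0 x1 \<in> U"
    by (simp add: U_def homogeneous)
  moreover have "rs (3 / cmod (h x1)) x1 \<in> V"
    using \<open>h x1 \<noteq> 0\<close> by (simp add: V_def homogeneous norm_mult norm_divide)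
  ultimately have nonempty: "openin tau U \<and> U \<noteq> {} \<and> openin tau V \<and> V \<noteq> {}"
    by blast
  have orbit: "cmod (h ((T ^^ n) x)) = cmod z ^ n * cmod (h x)" for n x
    by (induction n) (simp_all add: eigen norm_mult)
  obtain n x where "n \<ge> 1" "x \<in> U" "(T ^^ n) x \<in> V"
    using transitive nonempty unfolding transitive_op_def by blast
  then have "cmod z > 1"
    using orbit[of n x] power_le_one[of "cmod z" n] mult_left_le_one_le[of "cmod (h x)" "cmod z ^ n"]
    by (force simp: U_def V_def)
  obtain m y where "y \<in> V" "(T ^^ m) y \<in> U"
    using transitive nonempty unfolding transitive_op_def by blast
  then show False
    using orbit[of m y] \<open>cmod z > 1\<close> one_le_power[of "cmod z" m]
      mult_le_cancel_right1[of "cmod (h y)" "cmod z ^ m"]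
    by (force simp: U_def V_def)
qed

context continuous_linear_operator
begin

lemma funpow_T_scale: "(T ^^ n) (sc c x) = sc c ((T ^^ n) x)"
  using vector_space.linear_funpow[OF vector_space_sc linear_T, of n]
  by (simp add: Vector_Spaces.linear_iff)

text \<open>The field is embedded into \<open>\<complex>\<close> by \<open>\<iota>\<close> (the inclusion for \<open>\<real>\<close>, the identity for
  \<open>\<complex>\<close>) so that the fundamental theorem of algebra is available.\<close>

lemma no_invariant_subspace_if_transitive:
  fixes \<iota> :: "'k \<Rightarrow> complex"
  assumes continuous_\<iota>: "continuous_on UNIV \<iota>" and "inj \<iota>"
    and additive: "\<And>a b. \<iota> (a + b) = \<iota> a + \<iota> b" and multiplicative: "\<And>a b. \<iota> (a * b) = \<iota> a * \<iota> b"
    and real: "\<And>t. \<iota> (of_real t) = of_real t"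
    and "transitive_op tau T"
  shows "dual_has_no_nontrivial_fd_invariant_subspace sc tau T"
proof (rule ccontr)
  assume "\<not> dual_has_no_nontrivial_fd_invariant_subspace sc tau T"
  then obtain f N c where f: "f \<in> dual_space sc tau" "f \<noteq> 0"
    and c: "\<exists>j\<le>N. c j \<noteq> 0" and relation: "\<And>x. (\<Sum>j\<le>N. c j * f ((T ^^ j) x)) = 0"
    by (rule orbit_relation_if_invariant_subspace) blast
  have \<iota>_0: "\<iota> 0 = 0"
    using real[of 0] by simp
  have \<iota>_sum: "\<iota> (\<Sum>j\<in>A. F j) = (\<Sum>j\<in>A. \<iota> (F j))" for A and F :: "nat \<Rightarrow> 'k"
    by (induction A rule: infinite_finite_induct) (simp_all add: \<iota>_0 additive)
  have \<iota>_nonzero: "a \<noteq> 0 \<Longrightarrow> \<iota> a \<noteq> 0" for a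
    using \<open>inj \<iota>\<close> \<iota>_0 by (metis injD)
  define g where "g = (\<lambda>x. \<iota> (f x))"
  define q where "q = (\<Sum>j\<le>N. monom (\<iota> (c j)) j)"
  have "q \<noteq> 0"
  proof -
    obtain j where "j \<le> N" "c j \<noteq> 0" using c by blast
    then have "coeff q j \<noteq> 0"
      using \<iota>_nonzero by (simp add: q_def coeff_sum coeff_monom)
    then show ?thesis by auto
  qed
  moreover have "dual_poly q T g x = 0" for x
    using arg_cong[OF relation[of x], of \<iota>]
    by (simp add: q_def g_def dual_poly_of_coefficients \<iota>_sum multiplicative \<iota>_0)
  moreover have "g \<noteq> 0"
    using f(2) \<iota>_nonzero by (auto simp: g_def fun_eq_iff)
  ultimately obtain r z where r: "dual_poly r T g \<noteq> 0" "\<And>x. dual_poly r T g (T x) = z * dual_poly r T g x"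
    using eigenfunction_from_annihilating_poly by blast
  have "continuous_map tau euclidean g"
    using continuous_map_compose[of tau euclidean f euclidean \<iota>] f(1) continuous_\<iota>
    by (simp add: dual_space_def g_def comp_def continuous_map_iff_continuous2)
  then have continuous_h: "continuous_map tau euclidean (dual_poly r T g)"
    unfolding dual_poly_def
    by (intro continuous_map_sum continuous_map_mult_left
        continuous_map_compose[OF continuous_map_funpow[OF continuous_T], unfolded comp_def]) auto
  have homogeneous_g: "g (sc (of_real t) x) = of_real t * g x" for t x
    using f(1) by (simp add: g_def dual_space_def functionals.linear_scale multiplicative real)
  have homogeneous_h: "dual_poly r T g (sc (of_real t) x) = of_real t * dual_poly r T g x" for t x
  proof -
    have "dual_poly r T g (sc (of_real t) x) = (\<Sum>i\<le>degree r. coeff r i * (of_real t * g ((T ^^ i) x)))"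
      by (simp only: dual_poly_def funpow_T_scale homogeneous_g)
    also have "\<dots> = of_real t * dual_poly r T g x"
      by (simp only: dual_poly_def sum_distrib_left mult.left_commute)
    finally show ?thesis .
  qed
  from r(1) have "\<exists>x1. dual_poly r T g x1 \<noteq> 0"
    by (simp add: fun_eq_iff)
  then obtain x1 where "dual_poly r T g x1 \<noteq> 0" ..
  then have "\<not> transitive_op tau T"
    by (rule eigenfunctional_not_transitive[OF topspace_tau continuous_h homogeneous_h r(2)])
  then show False using \<open>transitive_op tau T\<close> by simp
qed

theorem equivalences_hold_if_embeds_in_complex:
  fixes \<iota> :: "'k \<Rightarrow> complex"
  assumes "weak_topology sc tau" and "continuous_on UNIV \<iota>" "inj \<iota>"
    and "\<And>a b. \<iota> (a + b) = \<iota> a + \<iota> b" "\<And>a b. \<iota> (a * b) = \<iota> a * \<iota> b"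
    and "\<And>t. \<iota> (of_real t) = of_real t"
  shows "equivalences_hold sc tau T"
proof -
  have "transitive_op tau T \<Longrightarrow> dual_has_no_nontrivial_fd_invariant_subspace sc tau T"
    using no_invariant_subspace_if_transitive assms(2-6) by blast
  moreover have "mixing_op tau T \<Longrightarrow> transitive_op tau T"
    unfolding mixing_op_def transitive_op_def by blast
  ultimately show ?thesis
    unfolding equivalences_hold_def
    using poly_mixing_if_no_invariant_subspace[OF assms(1)] mixing_if_poly_mixing by blast
qed

end

theorem theorem1p1:
  shows
  "(\<forall>(sc :: real \<Rightarrow> 'a::ab_group_add \<Rightarrow> 'a) tau T.
      Hausdorff_tvs sc tau \<and> weak_topology sc tau \<and>
      Vector_Spaces.linear sc sc T \<and> continuous_map tau tau T
      \<longrightarrow> equivalences_hold sc tau T) \<and>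
   (\<forall>(sc :: complex \<Rightarrow> 'b::ab_group_add \<Rightarrow> 'b) tau T.
      Hausdorff_tvs sc tau \<and> weak_topology sc tau \<and>
      Vector_Spaces.linear sc sc T \<and> continuous_map tau tau T
      \<longrightarrow> equivalences_hold sc tau T)"
proof (intro conjI allI impI; elim conjE)
  fix sc :: "real \<Rightarrow> 'a \<Rightarrow> 'a" and tau T
  assume "Hausdorff_tvs sc tau" "weak_topology sc tau" "Vector_Spaces.linear sc sc T" "continuous_map tau tau T"
  then interpret continuous_linear_operator sc tau T
    by (simp add: continuous_linear_operator_def Hausdorff_tvs_def)
    \<comment> \<open>only the linear structure and \<open>topspace tau = UNIV\<close> are used from \<open>Hausdorff_tvs\<close>\<close>
  show "equivalences_hold sc tau T"
    by (rule equivalences_hold_if_embeds_in_complex[where \<iota> = complex_of_real])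
      (simp_all add: \<open>weak_topology sc tau\<close> continuous_on_of_real continuous_on_id inj_def)
next
  fix sc :: "complex \<Rightarrow> 'b \<Rightarrow> 'b" and tau T
  assume "Hausdorff_tvs sc tau" "weak_topology sc tau" "Vector_Spaces.linear sc sc T" "continuous_map tau tau T"
  then interpret continuous_linear_operator sc tau T
    by (simp add: continuous_linear_operator_def Hausdorff_tvs_def)
  show "equivalences_hold sc tau T"
    by (rule equivalences_hold_if_embeds_in_complex[where \<iota> = id])
      (simp_all add: \<open>weak_topology sc tau\<close>)
qed

end
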